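(* Let $p$ be an odd prime and $\sim$ a nontrivial equivalence relation on $\mathbb{Z}_p^\times$ such that $x \sim y$ and $x \neq y$ imply $(y-x) \sim (-x)$. Let $S$ be the union of some equivalence class with $\{0\}$. If $x,y$ and $z,w$ are two pairs of distinct elements of $S$ (i.e. $x \neq y$, $z\neq w$) with $x - y = z - w$, then $x = z$ and $y = w$. In other words, $S$ is a modular Golomb ruler.
   Context: A subset $S \subseteq \mathbb{Z}_p$ is a modular Golomb ruler if $0 \in S$ and for any $x\neq y$ and $z \neq w$ in $S$ with $x-y=z-w$ we have $x=z$ and $y=w$. An equivalence relation is nontrivial if it has at least two classes. *)

theory Defs
  imports "HOL-Number_Theory.Number_Theory"
begin

text \<open>Z_p is represented by the residues {0..<p} (as integers), Z_p^* by {1..<p}.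
  Arithmetic is taken mod p.\<close>

definition modular_golomb_ruler :: "int \<Rightarrow> int set \<Rightarrow> bool" where
  "modular_golomb_ruler p S \<longleftrightarrow> S \<subseteq> {0..<p} \<and> 0 \<in> S \<and>
     (\<forall>x\<in>S. \<forall>y\<in>S. \<forall>z\<in>S. \<forall>w\<in>S.
        x \<noteq> y \<and> z \<noteq> w \<and> (x - y) mod p = (z - w) mod p \<longrightarrow> x = z \<and> y = w)"

end

theory Submission
  imports Defs
begin

(* Write S = C \<union> {0}. For a \<noteq> b in S with b \<in> C, the difference a - b is related to -b:
   trivially if a = 0, and by the hypothesis otherwise. The class C never contains both c and -c,
   since then S would be closed under adding c and so would contain every multiple of c, i.e. all
   of Z_p. Hence a - b \<notin> C. If x - y = z - w, comparing the classes of this difference forces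
   y = w: when y, w \<in> C the elements -y and -w are related, and the hypothesis applied to them
   would put y - w into C; when exactly one of y, w is 0, one side of the equation lies in C and
   the other does not. *)

lemma exists_nat_multiple_cong:
  fixes c n y :: int
  assumes "coprime c n" and "n > 0"
  shows "\<exists>k::nat. [int k * c = y] (mod n)"
proof -
  obtain u where u: "[c * u = 1] (mod n)"
    using cong_solve_coprime_int[OF assms(1)] by blast
  have "[int (nat ((u * y) mod n)) * c = (u * y) * c] (mod n)"
    using assms(2) by (simp add: cong_def mod_mult_left_eq)
  also have "[(u * y) * c = (c * u) * y] (mod n)"
    by (simp add: ac_simps)
  also have "[(c * u) * y = 1 * y] (mod n)"
    using u by (rule cong_scalar_right)
  finally show ?thesis
    unfolding mult_1 by blast
qed

lemma quotient_eq_singleton: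
  assumes "equiv A r" and "A \<in> A // r"
  shows "A // r = {A}"
  using assms quotient_disj in_quotient_imp_non_empty in_quotient_imp_subset by fastforce

locale difference_closed_class =
  fixes p :: int and R :: "(int \<times> int) set" and C :: "int set"
  assumes prime_p: "prime p"
    and equiv_R: "equiv {1..<p} R"
    and difference_related: "\<And>x y. (x, y) \<in> R \<Longrightarrow> x \<noteq> y \<Longrightarrow> ((y - x) mod p, (- x) mod p) \<in> R"
    and C_class: "C \<in> {1..<p} // R"
    and C_proper: "C \<noteq> {1..<p}"
begin

lemma C_subset: "C \<subseteq> {1..<p}"
  using in_quotient_imp_subset[OF equiv_R C_class] .

lemma related_iff_in_C: "x \<in> C \<Longrightarrow> (x, y) \<in> R \<longleftrightarrow> y \<in> C"
  using in_quotient_imp_closed[OF equiv_R C_class] in_quotient_imp_in_rel[OF equiv_R C_class]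
  by blast

lemma mod_C [simp]: "x \<in> C \<Longrightarrow> x mod p = x"
  using C_subset by auto

lemma C_not_dvd: "c \<in> C \<Longrightarrow> \<not> p dvd c"
  using C_subset zdvd_not_zless by fastforce

lemma R_sym: "(x, y) \<in> R \<Longrightarrow> (y, x) \<in> R"
  using equiv_R by (auto simp: equiv_def dest: symD)

lemma R_trans: "(x, y) \<in> R \<Longrightarrow> (y, z) \<in> R \<Longrightarrow> (x, z) \<in> R"
  using equiv_R by (auto simp: equiv_def dest: transD)

lemma R_refl: "x \<in> {1..<p} \<Longrightarrow> (x, x) \<in> R"
  using equiv_R by (auto simp: equiv_def dest: refl_onD)

lemma difference_related_to_neg:
  assumes a: "a \<in> C \<union> {0}" and b: "b \<in> C" and "a \<noteq> b"
  shows "((a - b) mod p, (- b) mod p) \<in> R"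
proof (cases "a = 0")
  case True
  have "(- b) mod p \<noteq> 0"
    using C_not_dvd[OF b] by (simp add: mod_eq_0_iff_dvd)
  moreover have "0 \<le> (- b) mod p" and "(- b) mod p < p"
    using prime_gt_0_int[OF prime_p] by simp_all
  ultimately have "(- b) mod p \<in> {1..<p}"
    by simp
  then show ?thesis
    using True R_refl by simp
next
  case False
  then have "(b, a) \<in> R"
    using a b related_iff_in_C by blast
  then show ?thesis
    using difference_related \<open>a \<noteq> b\<close> by metis
qed

lemma neg_not_in_C:
  assumes c: "c \<in> C"
  shows "(- c) mod p \<notin> C"
proof
  assume neg_c: "(- c) mod p \<in> C"
  have shift: "(t + c) mod p \<in> C \<union> {0}" if t: "t \<in> C \<union> {0}" for t
  proof (cases "t = (- c) mod p")
    case True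
    then show ?thesis
      by (simp add: mod_add_left_eq)
  next
    case False
    then have "((t - (- c) mod p) mod p, (- ((- c) mod p)) mod p) \<in> R"
      using difference_related_to_neg[OF t neg_c] by blast
    then have "((t + c) mod p, c) \<in> R"
      using c by (simp add: mod_diff_right_eq mod_minus_eq)
    then show ?thesis
      using related_iff_in_C[OF c] R_sym by blast
  qed
  have multiple: "(int k * c) mod p \<in> C \<union> {0}" for k :: nat
  proof (induction k)
    case (Suc k)
    have "int (Suc k) * c = int k * c + c"
      by (simp add: distrib_right)
    then show ?case
      using shift[OF Suc.IH] by (simp only: mod_add_left_eq)
  qed simp
  have "coprime c p"
    using prime_imp_coprime[OF prime_p] C_not_dvd[OF c] by (simp add: coprime_commute)
  have "y \<in> C" if y: "y \<in> {1..<p}" for y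
  proof -
    obtain k :: nat where "[int k * c = y] (mod p)"
      using exists_nat_multiple_cong[OF \<open>coprime c p\<close>] y by force
    then have "y = (int k * c) mod p"
      using y by (simp add: cong_def)
    then show ?thesis
      using multiple[of k] y by auto
  qed
  then show False
    using C_subset C_proper by blast
qed

lemma difference_not_in_C:
  assumes "a \<in> C \<union> {0}" and "b \<in> C" and "a \<noteq> b"
  shows "(a - b) mod p \<notin> C"
  using difference_related_to_neg[OF assms] related_iff_in_C neg_not_in_C[OF \<open>b \<in> C\<close>] by blast

lemma neg_related_imp_eq:
  assumes y: "y \<in> C" and w: "w \<in> C" and related: "((- y) mod p, (- w) mod p) \<in> R"
  shows "y = w"
proof (rule ccontr)
  assume "y \<noteq> w"
  have "(- y) mod p \<noteq> (- w) mod p"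
  proof
    assume "(- y) mod p = (- w) mod p"
    then have "y mod p = w mod p"
      by (metis minus_minus mod_minus_eq)
    then show False
      using y w \<open>y \<noteq> w\<close> by simp
  qed
  then have "(((- w) mod p - (- y) mod p) mod p, (- ((- y) mod p)) mod p) \<in> R"
    using difference_related related by blast
  moreover have "(- ((- y) mod p)) mod p = y"
    using y by (simp add: mod_minus_eq)
  ultimately have "((y - w) mod p, y) \<in> R"
    by (simp add: mod_diff_eq)
  then have "(y - w) mod p \<in> C"
    using y related_iff_in_C R_sym by blast
  then show False
    using difference_not_in_C y w \<open>y \<noteq> w\<close> by blast
qed

lemma golomb_pair_eq:
  assumes x: "x \<in> C \<union> {0}" and y: "y \<in> C \<union> {0}" and z: "z \<in> C \<union> {0}" and w: "w \<in> C \<union> {0}"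
    and "x \<noteq> y" and "z \<noteq> w" and eq: "(x - y) mod p = (z - w) mod p"
  shows "x = z \<and> y = w"
proof -
  have "y = w"
  proof -
    consider "y \<in> C" "w \<in> C" | "y \<in> C" "w = 0" | "y = 0" "w \<in> C" | "y = 0" "w = 0"
      using y w by blast
    then show ?thesis
    proof cases
      case 1
      have "((x - y) mod p, (- y) mod p) \<in> R" and "((z - w) mod p, (- w) mod p) \<in> R"
        using difference_related_to_neg x z 1 \<open>x \<noteq> y\<close> \<open>z \<noteq> w\<close> by blast+
      then have "((- y) mod p, (- w) mod p) \<in> R"
        using eq R_sym R_trans by metis
      then show ?thesis
        using neg_related_imp_eq 1 by blast
    next
      case 2
      then have "(x - y) mod p \<in> C"
        using eq z \<open>z \<noteq> w\<close> by auto
      then show ?thesis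
        using difference_not_in_C x 2 \<open>x \<noteq> y\<close> by blast
    next
      case 3
      then have "(z - w) mod p \<in> C"
        using eq[symmetric] x \<open>x \<noteq> y\<close> by auto
      then show ?thesis
        using difference_not_in_C z 3 \<open>z \<noteq> w\<close> by blast
    qed simp
  qed
  then have "p dvd x - z"
    using eq by (simp add: mod_eq_dvd_iff)
  then have "x mod p = z mod p"
    by (simp add: mod_eq_dvd_iff)
  then have "x = z"
    using x z by auto
  with \<open>y = w\<close> show ?thesis
    by simp
qed

theorem golomb_ruler: "modular_golomb_ruler p (C \<union> {0})"
proof -
  have "C \<union> {0} \<subseteq> {0..<p}"
    using C_subset prime_gt_0_int[OF prime_p] by auto
  then show ?thesis
    unfolding modular_golomb_ruler_def using golomb_pair_eq by blast
qed

end

theorem corollary3p21: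
  fixes p :: int and R :: "(int \<times> int) set" and C :: "int set"
  assumes "prime p" and "odd p"
    and "equiv {1..<p} R"
    and "card ({1..<p} // R) \<ge> 2"
    and "\<And>x y. (x, y) \<in> R \<Longrightarrow> x \<noteq> y \<Longrightarrow> ((y - x) mod p, (- x) mod p) \<in> R"
    and "C \<in> {1..<p} // R"
  shows "modular_golomb_ruler p (C \<union> {0})"
proof -
  have "C \<noteq> {1..<p}"
    using quotient_eq_singleton[OF assms(3)] assms(4,6) by force
  with assms interpret difference_closed_class p R C
    by unfold_locales
  show ?thesis
    by (rule golomb_ruler)
qed

end
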